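(* Let $0<\epsilon\le 1$. Let $G$ and $H$ be connected graphs with positive edge resistances $\mathbf{r}_G$ and $\mathbf{r}_H$, and suppose there is a common set $V_{bdry}$ with $V_{bdry}\subseteq V(G)\cap V(H)$, $V_{bdry}\ne V(G)$, $V_{bdry}\neq V(H)$, such that the interior vertices are $V(G)\setminus V_{bdry}$ in $G$ and $V(H)\setminus V_{bdry}$ in $H$. Let $\mathbf{L}_{schur}(G)$ and $\mathbf{L}_{schur}(H)$ be the Schur complements onto $V_{bdry}$ of the Laplacians of $G$ and $H$, and assume $$\mathbf{L}_{schur}(G)\preceq(1+\epsilon)\,\mathbf{L}_{schur}(H).$$ Let $\mathbf{f}(G)$ be a flow on $G$ whose residual $\mathbf{d}(G)=\mathbf{B}_G^T\mathbf{f}(G)$ is zero on every vertex of $V(G)\setminus V_{bdry}$, and let $\mathbf{d}_{bdry}$ be its restriction to $V_{bdry}$. Then there is a flow $\mathbf{f}(H)$ on $H$ whose residual $\mathbf{B}_H^T\mathbf{f}(H)$ equals $\mathbf{d}_{bdry}$ on $V_{bdry}$ and is $0$ on every vertex of $V(H)\setminus V_{bdry}$, and which satisfies $$\mathcal{E}_{\mathbf{f}(H)}(\mathbf{r}_H)\le(1+3\epsilon)\,\mathcal{E}_{\mathbf{f}(G)}(\mathbf{r}_G).$$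
   Context: Edges of an undirected graph are oriented arbitrarily; the edge–vertex incidence matrix $\mathbf{B}$ has $\mathbf{B}(e,u)=-1$ if $u$ is the head of $e$, $1$ if $u$ is the tail of $e$, and $0$ otherwise. A flow is a vector $\mathbf{f}\in\mathbb{R}^E$, and its residual (demand it meets) is $\mathbf{B}^T\mathbf{f}$. Given positive resistances $\mathbf{r}$, the energy of $\mathbf{f}$ is $\mathcal{E}_{\mathbf{f}}(\mathbf{r})=\sum_e\mathbf{r}(e)\mathbf{f}(e)^2$, and the Laplacian is $\mathbf{L}=\mathbf{B}^T\mathbf{R}^{-1}\mathbf{B}$ with $\mathbf{R}=\mathrm{diag}(\mathbf{r})$ (edge weights $1/\mathbf{r}(e)$). Given a partition $V=V_{intr}\cup V_{bdry}$ (both nonempty), write $\mathbf{L}=\begin{pmatrix}\mathbf{L}_{intr}&\mathbf{L}_{mid}\\ \mathbf{L}_{mid}^T&\mathbf{L}_{bdry}\end{pmatrix}$ (rows/columns first $V_{intr}$ then $V_{bdry}$); for connected graphs $\mathbf{L}_{intr}$ is invertible and the Schur complement onto $V_{bdry}$ is $\mathbf{L}_{schur}=\mathbf{L}_{bdry}-\mathbf{L}_{mid}^T\mathbf{L}_{intr}^{-1}\mathbf{L}_{mid}$. $\mathbf{A}\preceq\mathbf{B}$ means $\mathbf{B}-\mathbf{A}$ is positive semidefinite. *)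

theory Defs
  imports Complex_Main
begin

text \<open>A finite undirected (multi)graph whose edges carry an arbitrary orientation:
  each edge e has a head and a tail (distinct endpoints).\<close>
record ('v, 'e) graph =
  verts :: "'v set"
  edges :: "'e set"
  head  :: "'e \<Rightarrow> 'v"
  tail  :: "'e \<Rightarrow> 'v"

definition wf_graph :: "('v, 'e) graph \<Rightarrow> bool" where
  "wf_graph G \<longleftrightarrow> finite (verts G) \<and> finite (edges G) \<and>
     (\<forall>e\<in>edges G. head G e \<in> verts G \<and> tail G e \<in> verts G \<and> head G e \<noteq> tail G e)"

definition adj_rel :: "('v, 'e) graph \<Rightarrow> ('v \<times> 'v) set" where
  "adj_rel G = {(a, b). \<exists>e\<in>edges G. (a = head G e \<and> b = tail G e) \<or> (a = tail G e \<and> b = head G e)}"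

definition connected_graph :: "('v, 'e) graph \<Rightarrow> bool" where
  "connected_graph G \<longleftrightarrow> wf_graph G \<and> verts G \<noteq> {} \<and>
     (\<forall>u\<in>verts G. \<forall>v\<in>verts G. (u, v) \<in> (adj_rel G)\<^sup>*)"

definition incidence :: "('v, 'e) graph \<Rightarrow> 'e \<Rightarrow> 'v \<Rightarrow> real" where
  "incidence G e u = (if u = head G e then -1 else if u = tail G e then 1 else 0)"

definition residual :: "('v, 'e) graph \<Rightarrow> ('e \<Rightarrow> real) \<Rightarrow> 'v \<Rightarrow> real" where
  "residual G f u = (\<Sum>e\<in>edges G. incidence G e u * f e)"

definition energy :: "('v, 'e) graph \<Rightarrow> ('e \<Rightarrow> real) \<Rightarrow> ('e \<Rightarrow> real) \<Rightarrow> real" where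
  "energy G f r = (\<Sum>e\<in>edges G. r e * (f e)\<^sup>2)"

definition laplacian :: "('v, 'e) graph \<Rightarrow> ('e \<Rightarrow> real) \<Rightarrow> 'v \<Rightarrow> 'v \<Rightarrow> real" where
  "laplacian G r u v = (\<Sum>e\<in>edges G. incidence G e u * incidence G e v / r e)"

definition inverse_on :: "'v set \<Rightarrow> ('v \<Rightarrow> 'v \<Rightarrow> real) \<Rightarrow> 'v \<Rightarrow> 'v \<Rightarrow> real" where
  "inverse_on S M = (THE N. (\<forall>u v. (u \<notin> S \<or> v \<notin> S) \<longrightarrow> N u v = 0) \<and>
      (\<forall>u\<in>S. \<forall>v\<in>S. (\<Sum>w\<in>S. M u w * N w v) = (if u = v then 1 else 0)))"

definition schur :: "('v, 'e) graph \<Rightarrow> ('e \<Rightarrow> real) \<Rightarrow> 'v set \<Rightarrow> 'v \<Rightarrow> 'v \<Rightarrow> real" where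
  "schur G r Vb u v =
     (let L = laplacian G r; I = verts G - Vb; Li = inverse_on I L in
      L u v - (\<Sum>a\<in>I. \<Sum>b\<in>I. L u a * Li a b * L b v))"

definition loewner_le :: "'v set \<Rightarrow> ('v \<Rightarrow> 'v \<Rightarrow> real) \<Rightarrow> ('v \<Rightarrow> 'v \<Rightarrow> real) \<Rightarrow> bool" where
  "loewner_le S A B \<longleftrightarrow> (\<forall>x :: 'v \<Rightarrow> real. (\<Sum>u\<in>S. \<Sum>v\<in>S. x u * (B u v - A u v) * x v) \<ge> 0)"

end

theory Submission imports Defs "Jordan_Normal_Form.Determinant" begin

(* Let d be the boundary demand of f(G).  In H we route d by the
   electrical flow f(H) = B phi / r, where phi solves L_H phi = d (d vanishes on
   the interior and sums to zero, so such phi exists in a connected graph).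
   Its energy is phi^T L_H phi, and because phi is harmonic on the interior it is
   the harmonic extension of its boundary values, so this energy equals the Schur
   form phi^T L_schur(H) phi = <phi, d>.  On the other side, for any boundary
   potential x, Thomson-type weak duality gives 2<x,d> - x^T L_schur(G) x <= E(f(G)).
   Taking x = phi/(1+eps) and using L_schur(G) <= (1+eps) L_schur(H) yields
   E(f(H)) = <phi,d> <= (1+eps) E(f(G)) <= (1+3 eps) E(f(G)). *)

section \<open>Injective square linear systems are solvable\<close>

lemma mat_inj_imp_surj:
  fixes A :: "real mat"
  assumes A: "A \<in> carrier_mat n n"
    and inj: "\<And>v. v \<in> carrier_vec n \<Longrightarrow> A *\<^sub>v v = 0\<^sub>v n \<Longrightarrow> v = 0\<^sub>v n"
    and b: "b \<in> carrier_vec n"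
  shows "\<exists>z\<in>carrier_vec n. A *\<^sub>v z = b"
proof -
  have "det A \<noteq> 0"
    using det_0_iff_vec_prod_zero_field[OF A] inj by blast
  from det_non_zero_imp_unit[OF A this, of "()"]
  obtain B where B: "B \<in> carrier_mat n n" and AB: "A * B = 1\<^sub>m n"
    unfolding Units_def ring_mat_def by auto
  have "A *\<^sub>v (B *\<^sub>v b) = b"
    using A B AB b by (metis assoc_mult_mat_vec one_mult_mat_vec)
  thus ?thesis using B b by (intro bexI[of _ "B *\<^sub>v b"]) auto
qed

lemma injective_system_solvable:
  fixes M :: "'v \<Rightarrow> 'v \<Rightarrow> real"
  assumes fin: "finite S"
    and inj: "\<And>x. \<forall>u\<in>S. (\<Sum>w\<in>S. M u w * x w) = 0 \<Longrightarrow> \<forall>u\<in>S. x u = 0"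
  shows "\<exists>x. \<forall>u\<in>S. (\<Sum>w\<in>S. M u w * x w) = y u"
proof -
  define n where "n = card S"
  obtain f where f: "bij_betw f {0..<n} S" using ex_bij_betw_nat_finite[OF fin] n_def by blast
  define g where "g = inv_into {0..<n} f"
  have gf: "\<And>i. i < n \<Longrightarrow> g (f i) = i" and fg: "\<And>w. w \<in> S \<Longrightarrow> f (g w) = w"
    and g_lt: "\<And>w. w \<in> S \<Longrightarrow> g w < n"
    using f unfolding g_def
    by (auto simp: bij_betw_inv_into_left bij_betw_inv_into_right bij_betw_def inv_into_into)
  have fS: "\<And>i. i < n \<Longrightarrow> f i \<in> S" using f by (auto simp: bij_betw_def)
  define A where "A = mat n n (\<lambda>(i,j). M (f i) (f j))"
  have transfer: "(\<Sum>w\<in>S. M u w * v $ g w) = (A *\<^sub>v v) $ g u"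
    if "u \<in> S" "v \<in> carrier_vec n" for u v
  proof -
    have "(\<Sum>w\<in>S. M u w * v $ g w) = (\<Sum>j<n. M (f (g u)) (f j) * v $ j)"
      using sum.reindex_bij_betw[OF f, of "\<lambda>w. M u w * v $ g w"] fg[OF that(1)] gf
      by (simp add: atLeast0LessThan)
    also have "\<dots> = (A *\<^sub>v v) $ g u"
      using that g_lt[OF that(1)]
      by (auto simp: A_def scalar_prod_def row_def atLeast0LessThan intro!: sum.cong)
    finally show ?thesis .
  qed
  have "v = 0\<^sub>v n" if v: "v \<in> carrier_vec n" "A *\<^sub>v v = 0\<^sub>v n" for v
  proof -
    have "\<forall>u\<in>S. (\<Sum>w\<in>S. M u w * v $ g w) = 0"
      using transfer v g_lt by simp
    hence "\<forall>u\<in>S. v $ g u = 0" by (rule inj)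
    thus ?thesis using v(1) fS gf by (metis eq_vecI carrier_vecD index_zero_vec)
  qed
  then obtain z where z: "z \<in> carrier_vec n" "A *\<^sub>v z = vec n (\<lambda>i. y (f i))"
    using mat_inj_imp_surj[of A n "vec n (\<lambda>i. y (f i))"] unfolding A_def by auto
  have "\<forall>u\<in>S. (\<Sum>w\<in>S. M u w * z $ g w) = y u"
    using transfer z g_lt fg by simp
  thus ?thesis by (rule exI[of _ "\<lambda>w. z $ g w"])
qed

lemma sum_zero_extension:
  assumes "finite A" "B \<subseteq> A"
  shows "(\<Sum>x\<in>A. if x \<in> B then g x else 0) = sum g B"
  using sum.inter_restrict[OF assms(1), of g B] assms(2) by (simp add: Int_absorb1 inf.absorb2)

section \<open>Potentials, the Laplacian action and energy identities\<close>

definition pot_drop :: "('v, 'e) graph \<Rightarrow> ('v \<Rightarrow> real) \<Rightarrow> 'e \<Rightarrow> real" where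
  "pot_drop G \<phi> e = \<phi> (tail G e) - \<phi> (head G e)"

definition lap_apply :: "('v, 'e) graph \<Rightarrow> ('e \<Rightarrow> real) \<Rightarrow> ('v \<Rightarrow> real) \<Rightarrow> 'v \<Rightarrow> real" where
  "lap_apply G r \<phi> u = (\<Sum>w\<in>verts G. laplacian G r u w * \<phi> w)"

lemma incidence_sum_pot_drop:
  assumes wf: "wf_graph G" and e: "e \<in> edges G"
  shows "(\<Sum>u\<in>verts G. incidence G e u * \<phi> u) = pot_drop G \<phi> e"
proof -
  have fin: "finite (verts G)" and ht: "head G e \<in> verts G" "tail G e \<in> verts G" "head G e \<noteq> tail G e"
    using wf e by (auto simp: wf_graph_def)
  have "(\<Sum>u\<in>verts G. incidence G e u * \<phi> u) =
      (\<Sum>u\<in>verts G. (if u = tail G e then \<phi> u else 0) - (if u = head G e then \<phi> u else 0))"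
    by (rule sum.cong) (use ht in \<open>auto simp: incidence_def\<close>)
  also have "\<dots> = pot_drop G \<phi> e"
    using fin ht by (simp add: sum_subtractf pot_drop_def)
  finally show ?thesis .
qed

lemma residual_pairing:
  assumes wf: "wf_graph G"
  shows "(\<Sum>u\<in>verts G. \<phi> u * residual G f u) = (\<Sum>e\<in>edges G. f e * pot_drop G \<phi> e)"
proof -
  have "(\<Sum>u\<in>verts G. \<phi> u * residual G f u)
      = (\<Sum>u\<in>verts G. \<Sum>e\<in>edges G. f e * (incidence G e u * \<phi> u))"
    unfolding residual_def sum_distrib_left by (simp add: algebra_simps)
  also have "\<dots> = (\<Sum>e\<in>edges G. \<Sum>u\<in>verts G. f e * (incidence G e u * \<phi> u))"
    by (rule sum.swap)
  also have "\<dots> = (\<Sum>e\<in>edges G. f e * pot_drop G \<phi> e)"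
    by (rule sum.cong) (simp_all add: sum_distrib_left[symmetric] incidence_sum_pot_drop[OF wf])
  finally show ?thesis .
qed

lemma residual_induced_flow:
  assumes wf: "wf_graph G"
  shows "residual G (\<lambda>e. pot_drop G \<phi> e / r e) u = lap_apply G r \<phi> u"
proof -
  have "lap_apply G r \<phi> u
      = (\<Sum>w\<in>verts G. \<Sum>e\<in>edges G. incidence G e u / r e * (incidence G e w * \<phi> w))"
    unfolding lap_apply_def laplacian_def sum_distrib_right by (simp add: algebra_simps)
  also have "\<dots> = (\<Sum>e\<in>edges G. \<Sum>w\<in>verts G. incidence G e u / r e * (incidence G e w * \<phi> w))"
    by (rule sum.swap)
  also have "\<dots> = (\<Sum>e\<in>edges G. incidence G e u * (pot_drop G \<phi> e / r e))"
    by (rule sum.cong[OF refl], subst sum_distrib_left[symmetric])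
      (simp add: incidence_sum_pot_drop[OF wf])
  finally show ?thesis by (simp add: residual_def)
qed

lemma laplacian_quadratic_form:
  assumes wf: "wf_graph G"
  shows "(\<Sum>u\<in>verts G. \<phi> u * lap_apply G r \<phi> u) = (\<Sum>e\<in>edges G. (pot_drop G \<phi> e)\<^sup>2 / r e)"
  using residual_pairing[OF wf, of \<phi> "\<lambda>e. pot_drop G \<phi> e / r e"] residual_induced_flow[OF wf]
  by (simp add: power2_eq_square)

lemma induced_flow_energy:
  assumes wf: "wf_graph G" and rpos: "\<forall>e\<in>edges G. r e > 0"
  shows "energy G (\<lambda>e. pot_drop G \<phi> e / r e) r = (\<Sum>u\<in>verts G. \<phi> u * lap_apply G r \<phi> u)"
  unfolding laplacian_quadratic_form[OF wf] energy_def
  by (rule sum.cong) (use rpos in \<open>auto simp: power2_eq_square\<close>)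

lemma residual_sum_zero: "wf_graph G \<Longrightarrow> (\<Sum>u\<in>verts G. residual G f u) = 0"
  using residual_pairing[of G "\<lambda>_. 1" f] by (simp add: pot_drop_def)

lemma lap_apply_sum_zero: "wf_graph G \<Longrightarrow> (\<Sum>u\<in>verts G. lap_apply G r \<phi> u) = 0"
  using residual_sum_zero[of G "\<lambda>e. pot_drop G \<phi> e / r e"] residual_induced_flow[of G \<phi> r] by simp

lemma boundary_demand_balanced:
  assumes wf: "wf_graph G" and Vb: "Vb \<subseteq> verts G"
    and fint: "\<forall>u\<in>verts G - Vb. residual G f u = 0"
  shows "(\<Sum>u\<in>Vb. residual G f u) = 0"
proof -
  have "(\<Sum>u\<in>Vb. residual G f u) = (\<Sum>u\<in>verts G. residual G f u)"
    using wf Vb fint by (intro sum.mono_neutral_left) (auto simp: wf_graph_def)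
  thus ?thesis using residual_sum_zero[OF wf] by simp
qed

section \<open>Grounded Laplacians of connected graphs are invertible\<close>

text \<open>If S misses a vertex of a connected graph, the principal submatrix of L on S has
  trivial kernel: x^T L x = 0 forces x to be constant, hence equal to its value 0 off S.\<close>
lemma grounded_laplacian_inj:
  assumes con: "connected_graph G" and rpos: "\<forall>e\<in>edges G. r e > 0"
    and S: "S \<subseteq> verts G" "S \<noteq> verts G"
    and hx: "\<forall>u\<in>S. (\<Sum>w\<in>S. laplacian G r u w * x w) = 0"
  shows "\<forall>u\<in>S. x u = 0"
proof -
  have wf: "wf_graph G" using con by (simp add: connected_graph_def)
  have fin: "finite (verts G)" "finite (edges G)" using wf by (auto simp: wf_graph_def)
  define x' where "x' w = (if w \<in> S then x w else 0)" for w
  have "lap_apply G r x' u = (\<Sum>w\<in>S. laplacian G r u w * x w)" for u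
    unfolding lap_apply_def x'_def using fin(1) S(1)
    using sum_zero_extension[OF fin(1) S(1), of "\<lambda>w. laplacian G r u w * x w"]
    by (simp add: if_distrib cong: if_cong)
  hence "(\<Sum>u\<in>verts G. x' u * lap_apply G r x' u) = 0"
    using hx by (intro sum.neutral) (auto simp: x'_def)
  hence "(\<Sum>e\<in>edges G. (pot_drop G x' e)\<^sup>2 / r e) = 0"
    using laplacian_quadratic_form[OF wf] by simp
  hence "\<forall>e\<in>edges G. (pot_drop G x' e)\<^sup>2 / r e = 0"
    using rpos fin(2) by (subst (asm) sum_nonneg_eq_0_iff) (auto intro: less_imp_le)
  hence flat: "\<forall>e\<in>edges G. x' (tail G e) = x' (head G e)"
    using rpos by (fastforce simp: pot_drop_def)
  have step: "x' a = x' b" if "(a, b) \<in> adj_rel G" for a b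
    using that flat unfolding adj_rel_def by auto
  have const: "x' a = x' b" if "(a, b) \<in> (adj_rel G)\<^sup>*" for a b
    using that by (induction rule: rtrancl_induct) (auto dest: step)
  obtain w where w: "w \<in> verts G" "w \<notin> S" using S by blast
  show ?thesis
  proof
    fix u assume u: "u \<in> S"
    have "(u, w) \<in> (adj_rel G)\<^sup>*" using con u w(1) S(1) unfolding connected_graph_def by blast
    hence "x' u = x' w" by (rule const)
    thus "x u = 0" using u w by (simp add: x'_def)
  qed
qed

lemma grounded_laplacian_solvable:
  assumes con: "connected_graph G" and rpos: "\<forall>e\<in>edges G. r e > 0"
    and S: "S \<subseteq> verts G" "S \<noteq> verts G"
  shows "\<exists>x. (\<forall>u. u \<notin> S \<longrightarrow> x u = 0) \<and> (\<forall>u\<in>S. (\<Sum>w\<in>S. laplacian G r u w * x w) = y u)"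
proof -
  have fin: "finite S" using con S by (auto simp: connected_graph_def wf_graph_def intro: finite_subset)
  obtain x where x: "\<forall>u\<in>S. (\<Sum>w\<in>S. laplacian G r u w * x w) = y u"
    using injective_system_solvable[OF fin, of "laplacian G r" y]
      grounded_laplacian_inj[OF con rpos S] by blast
  show ?thesis
    by (rule exI[of _ "\<lambda>w. if w \<in> S then x w else 0"]) (use x in auto)
qed

text \<open>So inverse_on S L really is a right inverse of L on S: the defining THE is
  satisfied, by assembling column solutions and using injectivity for uniqueness.\<close>
lemma inverse_on_laplacian:
  assumes con: "connected_graph G" and rpos: "\<forall>e\<in>edges G. r e > 0"
    and S: "S \<subseteq> verts G" "S \<noteq> verts G"
    and u: "u \<in> S" and v: "v \<in> S"
  shows "(\<Sum>w\<in>S. laplacian G r u w * inverse_on S (laplacian G r) w v) = (if u = v then 1 else 0)"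
proof -
  let ?L = "laplacian G r"
  let ?P = "\<lambda>N. (\<forall>u v. (u \<notin> S \<or> v \<notin> S) \<longrightarrow> N u v = 0) \<and>
      (\<forall>u\<in>S. \<forall>v\<in>S. (\<Sum>w\<in>S. ?L u w * N w v) = (if u = v then 1 else 0))"
  have "\<forall>v. \<exists>x. (\<forall>u. u \<notin> S \<longrightarrow> x u = 0) \<and>
      (\<forall>u\<in>S. (\<Sum>w\<in>S. ?L u w * x w) = (if u = v then 1 else 0))"
    by (intro allI grounded_laplacian_solvable[OF con rpos S])
  then obtain X where X: "\<forall>v. (\<forall>u. u \<notin> S \<longrightarrow> X v u = 0) \<and>
      (\<forall>u\<in>S. (\<Sum>w\<in>S. ?L u w * X v w) = (if u = v then 1 else 0))"
    by (rule choice[THEN exE])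
  define N where "N a b = (if b \<in> S then X b a else 0)" for a b
  have PN: "?P N" using X unfolding N_def by auto
  have "N' = N" if PN': "?P N'" for N'
  proof (intro ext)
    fix a b
    show "N' a b = N a b"
    proof (cases "a \<in> S \<and> b \<in> S")
      case True
      have "\<forall>u\<in>S. (\<Sum>w\<in>S. ?L u w * (N' w b - N w b)) = 0"
        using PN' PN True by (simp add: right_diff_distrib sum_subtractf)
      hence "\<forall>u\<in>S. N' u b - N u b = 0" by (rule grounded_laplacian_inj[OF con rpos S])
      thus ?thesis using True by simp
    next
      case False
      thus ?thesis using PN' PN by auto
    qed
  qed
  hence "?P (inverse_on S ?L)" unfolding inverse_on_def by (rule theI[of ?P N, OF PN])
  thus ?thesis using u v by blast
qed

section \<open>The harmonic extension and the Schur complement\<close>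

definition bdry_load :: "('v, 'e) graph \<Rightarrow> ('e \<Rightarrow> real) \<Rightarrow> 'v set \<Rightarrow> ('v \<Rightarrow> real) \<Rightarrow> 'v \<Rightarrow> real" where
  "bdry_load G r Vb x b = (\<Sum>v\<in>Vb. laplacian G r b v * x v)"

definition harm_ext :: "('v, 'e) graph \<Rightarrow> ('e \<Rightarrow> real) \<Rightarrow> 'v set \<Rightarrow> ('v \<Rightarrow> real) \<Rightarrow> 'v \<Rightarrow> real" where
  "harm_ext G r Vb x w = (if w \<in> Vb then x w else if w \<in> verts G - Vb then
      - (\<Sum>b\<in>verts G - Vb. inverse_on (verts G - Vb) (laplacian G r) w b * bdry_load G r Vb x b) else 0)"

lemma lap_apply_harm_ext:
  assumes wf: "wf_graph G" and Vb: "Vb \<subseteq> verts G"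
  shows "lap_apply G r (harm_ext G r Vb x) u = bdry_load G r Vb x u -
     (\<Sum>a\<in>verts G - Vb. laplacian G r u a *
        (\<Sum>b\<in>verts G - Vb. inverse_on (verts G - Vb) (laplacian G r) a b * bdry_load G r Vb x b))"
proof -
  have fin: "finite (verts G)" using wf by (simp add: wf_graph_def)
  let ?p = "\<lambda>w. laplacian G r u w * harm_ext G r Vb x w"
  have "lap_apply G r (harm_ext G r Vb x) u = sum ?p (verts G - Vb) + sum ?p Vb"
    unfolding lap_apply_def by (rule sum.subset_diff[OF Vb fin])
  moreover have "sum ?p Vb = bdry_load G r Vb x u"
    unfolding bdry_load_def by (rule sum.cong) (simp_all add: harm_ext_def)
  moreover have "sum ?p (verts G - Vb) = - (\<Sum>a\<in>verts G - Vb. laplacian G r u a *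
        (\<Sum>b\<in>verts G - Vb. inverse_on (verts G - Vb) (laplacian G r) a b * bdry_load G r Vb x b))"
    unfolding sum_negf[symmetric] by (rule sum.cong) (simp_all add: harm_ext_def)
  ultimately show ?thesis by simp
qed

lemma harm_ext_harmonic:
  assumes con: "connected_graph G" and rpos: "\<forall>e\<in>edges G. r e > 0"
    and Vb: "Vb \<subseteq> verts G" "Vb \<noteq> {}" and a: "a \<in> verts G - Vb"
  shows "lap_apply G r (harm_ext G r Vb x) a = 0"
proof -
  have wf: "wf_graph G" using con by (simp add: connected_graph_def)
  define I where "I = verts G - Vb"
  define N where "N = inverse_on I (laplacian G r)"
  define c where "c = bdry_load G r Vb x"
  have IS: "I \<subseteq> verts G" "I \<noteq> verts G" using Vb unfolding I_def by blast+
  have fin: "finite I" using wf unfolding I_def wf_graph_def by simp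
  have "(\<Sum>a'\<in>I. laplacian G r a a' * (\<Sum>b\<in>I. N a' b * c b))
      = (\<Sum>b\<in>I. (\<Sum>a'\<in>I. laplacian G r a a' * N a' b) * c b)"
    unfolding sum_distrib_left sum_distrib_right mult.assoc by (rule sum.swap)
  also have "\<dots> = (\<Sum>b\<in>I. if a = b then c b else 0)"
    by (rule sum.cong) (use inverse_on_laplacian[OF con rpos IS] a in \<open>simp_all add: I_def N_def\<close>)
  also have "\<dots> = c a" using fin a by (simp add: I_def)
  finally show ?thesis using lap_apply_harm_ext[OF wf Vb(1), of r x a] unfolding I_def N_def c_def by simp
qed

lemma harm_ext_boundary:
  assumes wf: "wf_graph G" and Vb: "Vb \<subseteq> verts G"
  shows "lap_apply G r (harm_ext G r Vb x) u = (\<Sum>v\<in>Vb. schur G r Vb u v * x v)"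
proof -
  define I where "I = verts G - Vb"
  define N where "N = inverse_on I (laplacian G r)"
  let ?L = "laplacian G r"
  have swap: "(\<Sum>v\<in>Vb. (\<Sum>a\<in>I. \<Sum>b\<in>I. ?L u a * N a b * ?L b v) * x v)
      = (\<Sum>a\<in>I. ?L u a * (\<Sum>b\<in>I. N a b * bdry_load G r Vb x b))"
    unfolding bdry_load_def sum_distrib_right sum_distrib_left
    by (subst sum.swap, rule sum.cong[OF refl], subst sum.swap) (simp add: mult.assoc)
  have "(\<Sum>v\<in>Vb. schur G r Vb u v * x v) =
      (\<Sum>v\<in>Vb. ?L u v * x v - (\<Sum>a\<in>I. \<Sum>b\<in>I. ?L u a * N a b * ?L b v) * x v)"
    unfolding schur_def Let_def I_def N_def by (simp add: left_diff_distrib)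
  also have "\<dots> = bdry_load G r Vb x u - (\<Sum>a\<in>I. ?L u a * (\<Sum>b\<in>I. N a b * bdry_load G r Vb x b))"
    by (simp only: sum_subtractf swap, simp add: bdry_load_def)
  finally show ?thesis using lap_apply_harm_ext[OF wf Vb, of r x u] unfolding I_def N_def by simp
qed

lemma harm_ext_quadratic_form:
  assumes con: "connected_graph G" and rpos: "\<forall>e\<in>edges G. r e > 0"
    and Vb: "Vb \<subseteq> verts G" "Vb \<noteq> {}"
  shows "(\<Sum>u\<in>verts G. harm_ext G r Vb x u * lap_apply G r (harm_ext G r Vb x) u)
     = (\<Sum>u\<in>Vb. \<Sum>v\<in>Vb. x u * schur G r Vb u v * x v)"
proof -
  have wf: "wf_graph G" using con by (simp add: connected_graph_def)
  have fin: "finite (verts G)" using wf by (simp add: wf_graph_def)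
  let ?p = "\<lambda>u. harm_ext G r Vb x u * lap_apply G r (harm_ext G r Vb x) u"
  have "sum ?p (verts G) = sum ?p (verts G - Vb) + sum ?p Vb"
    by (rule sum.subset_diff[OF Vb(1) fin])
  moreover have "sum ?p (verts G - Vb) = 0"
    by (rule sum.neutral) (simp add: harm_ext_harmonic[OF con rpos Vb])
  moreover have "sum ?p Vb = (\<Sum>u\<in>Vb. \<Sum>v\<in>Vb. x u * schur G r Vb u v * x v)"
    by (rule sum.cong)
      (simp_all add: harm_ext_def harm_ext_boundary[OF wf Vb(1)] sum_distrib_left mult.assoc)
  ultimately show ?thesis by simp
qed

text \<open>A potential harmonic on the interior coincides with the harmonic extension of its
  boundary values, so its energy phi^T L phi is its Schur complement form.\<close>
lemma harmonic_quadratic_form: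
  assumes con: "connected_graph G" and rpos: "\<forall>e\<in>edges G. r e > 0"
    and Vb: "Vb \<subseteq> verts G" "Vb \<noteq> {}"
    and harm: "\<forall>a\<in>verts G - Vb. lap_apply G r \<phi> a = 0"
  shows "(\<Sum>u\<in>verts G. \<phi> u * lap_apply G r \<phi> u) = (\<Sum>u\<in>Vb. \<Sum>v\<in>Vb. \<phi> u * schur G r Vb u v * \<phi> v)"
proof -
  have fin: "finite (verts G)" using con by (simp add: connected_graph_def wf_graph_def)
  define \<psi> where "\<psi> = harm_ext G r Vb \<phi>"
  define I where "I = verts G - Vb"
  have IS: "I \<subseteq> verts G" "I \<noteq> verts G" using Vb unfolding I_def by blast+
  have "(\<Sum>w\<in>I. laplacian G r a w * (\<phi> w - \<psi> w)) = lap_apply G r \<phi> a - lap_apply G r \<psi> a"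
    for a
  proof -
    have "(\<Sum>w\<in>I. laplacian G r a w * (\<phi> w - \<psi> w))
        = (\<Sum>w\<in>verts G. laplacian G r a w * (\<phi> w - \<psi> w))"
      by (rule sum.mono_neutral_left[OF fin IS(1)]) (auto simp: I_def \<psi>_def harm_ext_def)
    thus ?thesis unfolding lap_apply_def by (simp add: right_diff_distrib sum_subtractf)
  qed
  hence "\<forall>a\<in>I. (\<Sum>w\<in>I. laplacian G r a w * (\<phi> w - \<psi> w)) = 0"
    using harm harm_ext_harmonic[OF con rpos Vb] unfolding I_def \<psi>_def by simp
  hence interior: "\<forall>a\<in>I. \<phi> a - \<psi> a = 0" by (rule grounded_laplacian_inj[OF con rpos IS])
  have "\<forall>u\<in>Vb. \<psi> u = \<phi> u" by (simp add: \<psi>_def harm_ext_def)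
  hence agree: "\<forall>u\<in>verts G. \<phi> u = \<psi> u" using interior by (auto simp: I_def)
  hence "lap_apply G r \<phi> u = lap_apply G r \<psi> u" for u
    unfolding lap_apply_def by (intro sum.cong) auto
  hence "(\<Sum>u\<in>verts G. \<phi> u * lap_apply G r \<phi> u) = (\<Sum>u\<in>verts G. \<psi> u * lap_apply G r \<psi> u)"
    using agree by (intro sum.cong) auto
  thus ?thesis using harm_ext_quadratic_form[OF con rpos Vb, of \<phi>] unfolding \<psi>_def by simp
qed

section \<open>Weak duality for flows meeting boundary demands\<close>

lemma young_term:
  fixes r f g :: real assumes r: "r > 0"
  shows "2 * (f * g) - g\<^sup>2 / r \<le> r * f\<^sup>2"
proof -
  have "r * f\<^sup>2 - (2 * (f * g) - g\<^sup>2 / r) = (r * f - g)\<^sup>2 / r"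
    using r by (simp add: field_simps power2_eq_square)
  moreover have "(r * f - g)\<^sup>2 / r \<ge> 0" using r by simp
  ultimately show ?thesis by linarith
qed

text \<open>Test f against the
  flow induced by the harmonic extension of x and apply Young's inequality edgewise.\<close>
lemma weak_duality:
  assumes con: "connected_graph G" and rpos: "\<forall>e\<in>edges G. r e > 0"
    and Vb: "Vb \<subseteq> verts G" "Vb \<noteq> {}"
    and fint: "\<forall>u\<in>verts G - Vb. residual G f u = 0"
  shows "2 * (\<Sum>u\<in>Vb. x u * residual G f u) - (\<Sum>u\<in>Vb. \<Sum>v\<in>Vb. x u * schur G r Vb u v * x v)
     \<le> energy G f r"
proof -
  have wf: "wf_graph G" using con by (simp add: connected_graph_def)
  have fin: "finite (verts G)" using wf by (auto simp: wf_graph_def)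
  define \<psi> where "\<psi> = harm_ext G r Vb x"
  define g where "g e = pot_drop G \<psi> e" for e
  have Q: "(\<Sum>u\<in>Vb. \<Sum>v\<in>Vb. x u * schur G r Vb u v * x v) = (\<Sum>e\<in>edges G. (g e)\<^sup>2 / r e)"
    using harm_ext_quadratic_form[OF con rpos Vb, of x] laplacian_quadratic_form[OF wf, of \<psi> r]
    unfolding \<psi>_def g_def by simp
  have "(\<Sum>u\<in>Vb. x u * residual G f u) = (\<Sum>u\<in>Vb. \<psi> u * residual G f u)"
    by (rule sum.cong) (simp_all add: \<psi>_def harm_ext_def)
  also have "\<dots> = (\<Sum>u\<in>verts G. \<psi> u * residual G f u)"
    by (rule sum.mono_neutral_left[OF fin Vb(1)]) (use fint in auto)
  finally have P: "(\<Sum>u\<in>Vb. x u * residual G f u) = (\<Sum>e\<in>edges G. f e * g e)"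
    unfolding g_def residual_pairing[OF wf] .
  have "2 * (\<Sum>e\<in>edges G. f e * g e) - (\<Sum>e\<in>edges G. (g e)\<^sup>2 / r e)
      = (\<Sum>e\<in>edges G. 2 * (f e * g e) - (g e)\<^sup>2 / r e)"
    by (simp add: sum_subtractf sum_distrib_left)
  also have "\<dots> \<le> (\<Sum>e\<in>edges G. r e * (f e)\<^sup>2)"
    by (rule sum_mono) (use rpos young_term in auto)
  finally show ?thesis unfolding P Q energy_def .
qed

text \<open>The scaled form used in the theorem: if x^T L_schur x <= c x^T d, then testing
  with x / c gives x^T d <= c E(f).\<close>
lemma energy_lower_bound:
  assumes con: "connected_graph G" and rpos: "\<forall>e\<in>edges G. r e > 0"
    and Vb: "Vb \<subseteq> verts G" "Vb \<noteq> {}"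
    and fint: "\<forall>u\<in>verts G - Vb. residual G f u = 0"
    and c: "c > 0"
    and form_le: "(\<Sum>u\<in>Vb. \<Sum>v\<in>Vb. x u * schur G r Vb u v * x v) \<le> c * (\<Sum>u\<in>Vb. x u * residual G f u)"
  shows "(\<Sum>u\<in>Vb. x u * residual G f u) \<le> c * energy G f r"
proof -
  define D where "D = (\<Sum>u\<in>Vb. x u * residual G f u)"
  define Q where "Q = (\<Sum>u\<in>Vb. \<Sum>v\<in>Vb. x u * schur G r Vb u v * x v)"
  have "2 * (D / c) - Q / c\<^sup>2 \<le> energy G f r"
    using weak_duality[OF con rpos Vb fint, of "\<lambda>u. x u / c"]
    unfolding D_def Q_def by (simp add: sum_divide_distrib power2_eq_square)
  moreover have "Q / c\<^sup>2 \<le> D / c"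
    using form_le c unfolding D_def Q_def by (simp add: power2_eq_square field_simps)
  ultimately have "D / c \<le> energy G f r" by linarith
  thus ?thesis using c unfolding D_def by (simp add: pos_divide_le_eq mult.commute)
qed

section \<open>Electrical flows\<close>

text \<open>In a connected graph every demand with total sum zero is L phi for some potential phi:
  ground one vertex v0, solve on the rest, and the equation at v0 follows from the sums.\<close>
lemma potential_for_balanced_demand:
  assumes con: "connected_graph G" and rpos: "\<forall>e\<in>edges G. r e > 0"
    and balanced: "(\<Sum>u\<in>verts G. d u) = 0"
  shows "\<exists>\<phi>. \<forall>u\<in>verts G. lap_apply G r \<phi> u = d u"
proof -
  have wf: "wf_graph G" and fin: "finite (verts G)"
    using con by (auto simp: connected_graph_def wf_graph_def)
  obtain v0 where v0: "v0 \<in> verts G" using con by (auto simp: connected_graph_def)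
  define S where "S = verts G - {v0}"
  have S: "S \<subseteq> verts G" "S \<noteq> verts G" using v0 unfolding S_def by blast+
  obtain \<phi> where \<phi>0: "\<forall>u. u \<notin> S \<longrightarrow> \<phi> u = 0"
     and \<phi>S: "\<forall>u\<in>S. (\<Sum>w\<in>S. laplacian G r u w * \<phi> w) = d u"
    using grounded_laplacian_solvable[OF con rpos S] by blast
  have "lap_apply G r \<phi> u = (\<Sum>w\<in>S. laplacian G r u w * \<phi> w)" for u
    unfolding lap_apply_def by (rule sum.mono_neutral_right[OF fin S(1)]) (use \<phi>0 in auto)
  hence off_v0: "\<forall>u\<in>S. lap_apply G r \<phi> u = d u" using \<phi>S by simp
  have "lap_apply G r \<phi> v0 + (\<Sum>u\<in>S. lap_apply G r \<phi> u) = d v0 + (\<Sum>u\<in>S. d u)"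
    using lap_apply_sum_zero[OF wf, of r \<phi>] balanced sum.remove[OF fin v0] unfolding S_def
    by metis
  hence "lap_apply G r \<phi> v0 = d v0" using off_v0 by simp
  hence "\<forall>u\<in>verts G. lap_apply G r \<phi> u = d u" using off_v0 unfolding S_def by blast
  thus ?thesis by blast
qed

text \<open>Electrical routing of a balanced boundary demand d: extend d by zero, take a potential
  phi with L phi = d, and let f be the flow it induces.  Then f meets d on the boundary and
  is conserved inside, and its energy phi^T L phi equals both the pairing of phi with d and,
  phi being harmonic inside, the Schur complement form of phi.\<close>
lemma electrical_flow:
  assumes con: "connected_graph G" and rpos: "\<forall>e\<in>edges G. r e > 0"
    and Vb: "Vb \<subseteq> verts G" "Vb \<noteq> {}" and balanced: "(\<Sum>u\<in>Vb. d u) = 0"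
  shows "\<exists>\<phi> f. (\<forall>u\<in>Vb. residual G f u = d u) \<and> (\<forall>u\<in>verts G - Vb. residual G f u = 0) \<and>
     energy G f r = (\<Sum>u\<in>Vb. \<phi> u * d u) \<and>
     (\<Sum>u\<in>Vb. \<Sum>v\<in>Vb. \<phi> u * schur G r Vb u v * \<phi> v) = (\<Sum>u\<in>Vb. \<phi> u * d u)"
proof -
  have wf: "wf_graph G" and fin: "finite (verts G)"
    using con by (auto simp: connected_graph_def wf_graph_def)
  define d' where "d' u = (if u \<in> Vb then d u else 0)" for u
  have "(\<Sum>u\<in>verts G. d' u) = 0"
    using balanced fin Vb(1) by (simp add: d'_def sum_zero_extension)
  then obtain \<phi> where \<phi>: "\<forall>u\<in>verts G. lap_apply G r \<phi> u = d' u"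
    using potential_for_balanced_demand[OF con rpos] by blast
  define f where "f e = pot_drop G \<phi> e / r e" for e
  have res: "residual G f u = lap_apply G r \<phi> u" for u
    unfolding f_def by (rule residual_induced_flow[OF wf])
  have "energy G f r = (\<Sum>u\<in>verts G. \<phi> u * lap_apply G r \<phi> u)"
    unfolding f_def by (rule induced_flow_energy[OF wf rpos])
  also have "\<dots> = (\<Sum>u\<in>verts G. if u \<in> Vb then \<phi> u * d u else 0)"
    using \<phi> by (intro sum.cong) (auto simp: d'_def)
  finally have E: "energy G f r = (\<Sum>u\<in>Vb. \<phi> u * d u)"
    using sum_zero_extension[OF fin Vb(1)] by simp
  have "(\<Sum>u\<in>verts G. \<phi> u * lap_apply G r \<phi> u)
      = (\<Sum>u\<in>Vb. \<Sum>v\<in>Vb. \<phi> u * schur G r Vb u v * \<phi> v)"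
    using \<phi> by (intro harmonic_quadratic_form[OF con rpos Vb]) (simp add: d'_def)
  hence Q: "(\<Sum>u\<in>Vb. \<Sum>v\<in>Vb. \<phi> u * schur G r Vb u v * \<phi> v) = (\<Sum>u\<in>Vb. \<phi> u * d u)"
    using E induced_flow_energy[OF wf rpos, of \<phi>] unfolding f_def by simp
  show ?thesis
    using res \<phi> Vb(1) E Q by (intro exI[of _ \<phi>] exI[of _ f]) (auto simp: d'_def)
qed

lemma loewner_le_scaled_quadratic:
  assumes "loewner_le S A (\<lambda>u v. c * B u v)"
  shows "(\<Sum>u\<in>S. \<Sum>v\<in>S. x u * A u v * x v) \<le> c * (\<Sum>u\<in>S. \<Sum>v\<in>S. x u * B u v * x v)"
proof -
  have "0 \<le> (\<Sum>u\<in>S. \<Sum>v\<in>S. x u * (c * B u v - A u v) * x v)"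
    using assms unfolding loewner_le_def by blast
  also have "\<dots> = c * (\<Sum>u\<in>S. \<Sum>v\<in>S. x u * B u v * x v) - (\<Sum>u\<in>S. \<Sum>v\<in>S. x u * A u v * x v)"
    by (simp add: sum_subtractf sum_distrib_left algebra_simps)
  finally show ?thesis by simp
qed

lemma energy_nonneg: "\<forall>e\<in>edges G. r e > 0 \<Longrightarrow> energy G f r \<ge> 0"
  unfolding energy_def by (intro sum_nonneg) (auto intro: less_imp_le)

theorem mainTheorem8:
  fixes G :: "('v, 'e) graph" and H :: "('v, 'h) graph"
    and rG :: "'e \<Rightarrow> real" and rH :: "'h \<Rightarrow> real"
    and Vb :: "'v set" and \<epsilon> :: real and fG :: "'e \<Rightarrow> real"
  assumes eps: "0 < \<epsilon>" "\<epsilon> \<le> 1"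
    and conG: "connected_graph G" and conH: "connected_graph H"
    and rG_pos: "\<forall>e\<in>edges G. rG e > 0" and rH_pos: "\<forall>e\<in>edges H. rH e > 0"
    and bdry: "Vb \<subseteq> verts G \<inter> verts H" "Vb \<noteq> {}" "Vb \<noteq> verts G" "Vb \<noteq> verts H"
    and schur_le: "loewner_le Vb (schur G rG Vb) (\<lambda>u v. (1 + \<epsilon>) * schur H rH Vb u v)"
    and fG_int: "\<forall>u\<in>verts G - Vb. residual G fG u = 0"
  shows "\<exists>fH :: 'h \<Rightarrow> real.
           (\<forall>u\<in>Vb. residual H fH u = residual G fG u) \<and>
           (\<forall>u\<in>verts H - Vb. residual H fH u = 0) \<and>
           energy H fH rH \<le> (1 + 3 * \<epsilon>) * energy G fG rG"
proof -
  have wfG: "wf_graph G" using conG by (simp add: connected_graph_def)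
  have VbG: "Vb \<subseteq> verts G" and VbH: "Vb \<subseteq> verts H" using bdry(1) by auto
  obtain \<phi> fH where routes: "\<forall>u\<in>Vb. residual H fH u = residual G fG u"
      "\<forall>u\<in>verts H - Vb. residual H fH u = 0"
    and EH: "energy H fH rH = (\<Sum>u\<in>Vb. \<phi> u * residual G fG u)"
    and QH: "(\<Sum>u\<in>Vb. \<Sum>v\<in>Vb. \<phi> u * schur H rH Vb u v * \<phi> v) = (\<Sum>u\<in>Vb. \<phi> u * residual G fG u)"
    using electrical_flow[OF conH rH_pos VbH bdry(2) boundary_demand_balanced[OF wfG VbG fG_int]]
    by blast
  have "(\<Sum>u\<in>Vb. \<Sum>v\<in>Vb. \<phi> u * schur G rG Vb u v * \<phi> v)
      \<le> (1 + \<epsilon>) * (\<Sum>u\<in>Vb. \<phi> u * residual G fG u)"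
    using loewner_le_scaled_quadratic[OF schur_le, of \<phi>] QH by simp
  hence "energy H fH rH \<le> (1 + \<epsilon>) * energy G fG rG"
    using energy_lower_bound[OF conG rG_pos VbG bdry(2) fG_int] eps EH by simp
  moreover have "(1 + \<epsilon>) * energy G fG rG \<le> (1 + 3 * \<epsilon>) * energy G fG rG"
    using energy_nonneg[OF rG_pos, of fG] eps by (intro mult_right_mono) auto
  ultimately show ?thesis using routes by (intro exI[of _ fH]) auto
qed

end
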